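(* Let $\alpha:M_s\to M_s$ be a completely positive linear map on the algebra of complex $s\times s$ matrices. If $\alpha^m=0$ for some integer $m\ge1$, then $\alpha^s=0$; in particular the nilpotency index of $\alpha$ is at most $s$. *)

theory Defs
  imports "HOL-Analysis.Analysis"
begin

text \<open>Complex s x s matrices are rendered as complex^'n^'n with s = CARD('n).\<close>

definition mat_scale :: "complex \<Rightarrow> complex^'n^'m \<Rightarrow> complex^'n^'m" where
  "mat_scale c A = (\<chi> i j. c * A$i$j)"

definition clinear_map :: "(complex^'n^'n \<Rightarrow> complex^'n^'n) \<Rightarrow> bool" where
  "clinear_map \<alpha> \<longleftrightarrow>
     (\<forall>A B. \<alpha> (A + B) = \<alpha> A + \<alpha> B) \<and> (\<forall>c A. \<alpha> (mat_scale c A) = mat_scale c (\<alpha> A))"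

text \<open>A k x k block matrix X with blocks X i j in M_s (i, j < k), viewed as an element of
  M_k(M_s) = M_{ks}, is positive semidefinite iff v* X v is real and nonnegative for
  every vector v in C^{ks} (written as k blocks v i in C^s).\<close>
definition block_psd :: "nat \<Rightarrow> (nat \<Rightarrow> nat \<Rightarrow> complex^'n^'n) \<Rightarrow> bool" where
  "block_psd k X \<longleftrightarrow>
     (\<forall>v :: nat \<Rightarrow> complex^'n.
        let q = (\<Sum>i<k. \<Sum>j<k. \<Sum>a\<in>UNIV. \<Sum>b\<in>UNIV. cnj (v i $ a) * (X i j $ a $ b) * (v j $ b))
        in Im q = 0 \<and> Re q \<ge> 0)"

text \<open>Complete positivity: id_k tensor alpha maps positive elements of M_k(M_s) to
  positive elements, for every k.\<close>
definition completely_positive :: "(complex^'n^'n \<Rightarrow> complex^'n^'n) \<Rightarrow> bool" where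
  "completely_positive \<alpha> \<longleftrightarrow>
     (\<forall>k X. block_psd k X \<longrightarrow> block_psd k (\<lambda>i j. \<alpha> (X i j)))"

end

theory Submission
  imports Defs
begin

text \<open>If psd matrices satisfy \<open>ker A \<subseteq> ker B\<close>, then
  \<open>B \<le> c A\<close> for some \<open>c \<ge> 0\<close>, hence \<open>\<alpha> B \<le> c \<alpha> A\<close> and \<open>ker (\<alpha> A) \<subseteq> ker (\<alpha> B)\<close>.
  Applied to \<open>P\<^sub>k = \<alpha>\<^sup>k 1\<close>, this makes the kernels \<open>N\<^sub>k\<close> of \<open>P\<^sub>k\<close> an increasing chain of
  subspaces that stays constant once two consecutive members agree. As \<open>P\<^sub>m = 0\<close>, the chain
  grows strictly until it is all of \<open>\<complex>\<^sup>s\<close>, so \<open>N\<^sub>s = \<complex>\<^sup>s\<close> and \<open>P\<^sub>s = 0\<close>. Since every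
  psd \<open>X\<close> has \<open>ker 1 \<subseteq> ker X\<close>, also \<open>\<alpha>\<^sup>s X = 0\<close>, and psd matrices span \<open>M\<^sub>s\<close>.\<close>

context finite_dimensional_vector_space
begin

lemma subspace_chain_reaches_UNIV:
  fixes N :: "nat \<Rightarrow> 'b set"
  assumes subspace: "\<And>k. subspace (N k)"
    and mono: "\<And>k. N k \<subseteq> N (Suc k)"
    and stays_stationary: "\<And>k. N (Suc k) = N k \<Longrightarrow> N (Suc (Suc k)) = N (Suc k)"
    and full: "N m = UNIV"
  shows "N (dim UNIV) = UNIV"
proof -
  have stationary_is_full: "N k = UNIV" if "N (Suc k) = N k" for k
  proof -
    have "N (Suc (k + j)) = N (k + j)" for j
      by (induction j) (use that stays_stationary in auto)
    then have "N (k + j) = N k" for j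
      by (induction j) auto
    moreover have "N m \<subseteq> N (k + m)"
      using lift_Suc_mono_le[of N, OF mono] by simp
    ultimately show ?thesis using full by auto
  qed
  have "N k = UNIV \<or> k \<le> dim (N k)" for k
  proof (induction k)
    case (Suc k)
    show ?case
    proof (cases "N k = UNIV")
      case True
      then show ?thesis using mono[of k] by auto
    next
      case False
      then have "N k \<subset> N (Suc k)" using mono[of k] stationary_is_full by blast
      then have "dim (N k) < dim (N (Suc k))"
        using dim_psubset subspace by (metis span_eq_iff)
      then show ?thesis using Suc.IH False by simp
    qed
  qed simp
  then show ?thesis
    using subspace_dim_equal[OF subspace subspace_UNIV] by blast
qed

end

lemma affine_nonneg_imp_slope_zero:
  fixes a c :: real
  assumes "\<And>t. a + t * c \<ge> 0"
  shows "c = 0"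
proof (rule ccontr)
  assume "c \<noteq> 0"
  then have "a + (- (\<bar>a\<bar> + 1) / c) * c = a - (\<bar>a\<bar> + 1)" by simp
  then show False using assms[of "- (\<bar>a\<bar> + 1) / c"] by linarith
qed

lemma mat_scale_zero [simp]: "mat_scale c 0 = 0"
  by (simp add: mat_scale_def vec_eq_iff)

lemma mat_scale_1 [simp]: "mat_scale 1 A = A"
  by (simp add: mat_scale_def vec_eq_iff)

lemma mat_scale_mat_scale: "mat_scale c (mat_scale d A) = mat_scale (c * d) A"
  by (simp add: mat_scale_def vec_eq_iff)

lemma clinear_map_zero: "clinear_map \<beta> \<Longrightarrow> \<beta> 0 = 0"
  unfolding clinear_map_def by (metis add.right_neutral add_left_imp_eq)

lemma clinear_map_diff: "clinear_map \<beta> \<Longrightarrow> \<beta> (A - B) = \<beta> A - \<beta> B"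
  unfolding clinear_map_def by (metis eq_diff_eq)

lemma clinear_map_sum: "clinear_map \<beta> \<Longrightarrow> \<beta> (\<Sum>x\<in>F. f x) = (\<Sum>x\<in>F. \<beta> (f x))"
  by (induction F rule: infinite_finite_induct) (auto simp: clinear_map_zero clinear_map_def)

lemma clinear_map_funpow: "clinear_map \<alpha> \<Longrightarrow> clinear_map (\<alpha> ^^ k)"
  by (induction k) (auto simp: clinear_map_def)

definition sesq_form :: "complex^'n^'n \<Rightarrow> complex^'n \<Rightarrow> complex^'n \<Rightarrow> complex" where
  "sesq_form A x y = (\<Sum>a\<in>UNIV. \<Sum>b\<in>UNIV. cnj (x $ a) * (A $ a $ b) * (y $ b))"

abbreviation quad_form :: "complex^'n^'n \<Rightarrow> complex^'n \<Rightarrow> complex" where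
  "quad_form A x \<equiv> sesq_form A x x"

definition psd_matrix :: "complex^'n^'n \<Rightarrow> bool" where
  "psd_matrix A \<longleftrightarrow> (\<forall>v. Im (quad_form A v) = 0 \<and> Re (quad_form A v) \<ge> 0)"

text \<open>For a psd matrix these are exactly the vectors of its kernel.\<close>

definition null_vectors :: "complex^'n^'n \<Rightarrow> (complex^'n) set" where
  "null_vectors A = {v. quad_form A v = 0}"

lemma sesq_form_add_left: "sesq_form A (x + y) z = sesq_form A x z + sesq_form A y z"
  by (simp add: sesq_form_def algebra_simps sum.distrib)

lemma sesq_form_add_right: "sesq_form A x (y + z) = sesq_form A x y + sesq_form A x z"
  by (simp add: sesq_form_def algebra_simps sum.distrib)

lemma sesq_form_smult_left: "sesq_form A (c *s x) y = cnj c * sesq_form A x y"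
  by (simp add: sesq_form_def sum_distrib_left algebra_simps)

lemma sesq_form_smult_right: "sesq_form A x (c *s y) = c * sesq_form A x y"
  by (simp add: sesq_form_def sum_distrib_left algebra_simps)

lemma sesq_form_diff_matrix: "sesq_form (A - B) x y = sesq_form A x y - sesq_form B x y"
  by (simp add: sesq_form_def algebra_simps sum_subtractf)

lemma sesq_form_mat_scale: "sesq_form (mat_scale c A) x y = c * sesq_form A x y"
  by (simp add: sesq_form_def mat_scale_def sum_distrib_left algebra_simps)

lemma sesq_form_zero_left [simp]: "sesq_form A 0 y = 0"
  by (simp add: sesq_form_def)

lemma sesq_form_zero_matrix [simp]: "sesq_form 0 x y = 0"
  by (simp add: sesq_form_def)

lemma quad_form_add:
  "quad_form A (v + w) = quad_form A v + sesq_form A v w + sesq_form A w v + quad_form A w"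
  by (simp add: sesq_form_add_left sesq_form_add_right)

lemma scaleR_eq_smult_of_real: "(r::real) *\<^sub>R (x::complex^'n) = complex_of_real r *s x"
  by (simp add: vec_eq_iff) (simp add: scaleR_conv_of_real)

lemma quad_form_scaleR: "quad_form A (r *\<^sub>R w) = complex_of_real (r\<^sup>2) * quad_form A w"
  by (simp add: scaleR_eq_smult_of_real sesq_form_smult_left sesq_form_smult_right power2_eq_square)

lemma psd_matrix_null_vector_sesq_form:
  assumes "psd_matrix A" "quad_form A v = 0"
  shows "sesq_form A v w = 0" "sesq_form A w v = 0"
proof -
  have expand: "quad_form A (w + c *s v) =
      quad_form A w + (c * sesq_form A w v + cnj c * sesq_form A v w)" for c
    using assms(2) by (simp add: quad_form_add sesq_form_smult_left sesq_form_smult_right)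
  \<comment> \<open>\<open>quad_form A (w + c v)\<close> is affine in real \<open>c\<close> and nonnegative, so its slope vanishes.\<close>
  have slope_zero: "z = 0"
    if "\<And>t::real. quad_form A (w + complex_of_real t *s u) = quad_form A w + complex_of_real t * z"
    for u z
  proof -
    have "Im (quad_form A w + complex_of_real t * z) = 0"
      "0 \<le> Re (quad_form A w + complex_of_real t * z)" for t
      using assms(1) that[of t] unfolding psd_matrix_def by metis+
    then have "0 \<le> Re (quad_form A w) + t * Re z" "0 \<le> Im (quad_form A w) + t * Im z" for t
      by simp_all
    then have "Re z = 0" "Im z = 0"
      by (blast intro: affine_nonneg_imp_slope_zero)+
    then show ?thesis
      by (simp add: complex_eq_iff)
  qed
  have "sesq_form A w v + sesq_form A v w = 0"
    by (rule slope_zero[of v]) (simp add: expand algebra_simps)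
  moreover have "\<i> * sesq_form A w v - \<i> * sesq_form A v w = 0"
    by (rule slope_zero[of "\<i> *s v"]) (simp add: expand algebra_simps)
  ultimately show "sesq_form A v w = 0" "sesq_form A w v = 0"
    by (simp_all add: algebra_simps)
qed

lemma psd_matrix_null_vectors_add:
  assumes "psd_matrix A" "v \<in> null_vectors A"
  shows "quad_form A (v + w) = quad_form A w"
  using psd_matrix_null_vector_sesq_form[OF assms(1), of v w] assms(2)
  by (simp add: null_vectors_def quad_form_add)

lemma zero_in_null_vectors [simp]: "0 \<in> null_vectors A"
  by (simp add: null_vectors_def)

lemma vec_subspace_null_vectors:
  assumes "psd_matrix A"
  shows "vec.subspace (null_vectors A)"
  unfolding vec.subspace_def
proof (intro conjI ballI allI)
  fix x y assume "x \<in> null_vectors A" "y \<in> null_vectors A"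
  then show "x + y \<in> null_vectors A"
    using psd_matrix_null_vectors_add[OF assms] by (simp add: null_vectors_def)
next
  fix c x assume "x \<in> null_vectors A"
  then show "c *s x \<in> null_vectors A"
    by (simp add: null_vectors_def sesq_form_smult_left sesq_form_smult_right)
qed (simp add: null_vectors_def)

lemma subspace_null_vectors:
  assumes "psd_matrix A"
  shows "subspace (null_vectors A)"
  using vec_subspace_null_vectors[OF assms] unfolding subspace_def scaleR_eq_smult_of_real
  by (metis vec.subspace_0 vec.subspace_add vec.subspace_scale)

lemma quad_form_mat_1: "quad_form (mat 1) v = complex_of_real ((norm v)\<^sup>2)"
proof -
  have "quad_form (mat 1) v = (\<Sum>a\<in>UNIV. \<Sum>b\<in>UNIV. if a = b then cnj (v$a) * v$b else 0)"
    unfolding sesq_form_def by (intro sum.cong refl) (simp add: mat_def)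
  also have "\<dots> = (\<Sum>a\<in>UNIV. cnj (v$a) * v$a)"
    by (simp add: sum.delta)
  also have "\<dots> = (\<Sum>a\<in>UNIV. complex_of_real ((norm (v$a))\<^sup>2))"
    by (intro sum.cong refl) (subst complex_norm_square, simp add: mult.commute)
  also have "\<dots> = complex_of_real ((norm v)\<^sup>2)"
    by (simp add: norm_vec_def L2_set_def sum_nonneg)
  finally show ?thesis .
qed

lemma psd_matrix_mat_1: "psd_matrix (mat 1)"
  unfolding psd_matrix_def quad_form_mat_1 by simp

lemma null_vectors_mat_1: "null_vectors (mat 1) = {0}"
  by (simp add: null_vectors_def quad_form_mat_1)

lemma sesq_form_axis: "sesq_form X (axis a 1) (axis b 1) = X $ a $ b"
proof -
  have "cnj (if i = a then 1 else 0) * x * (if j = b then 1 else 0) =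
      (if j = b then if i = a then x else 0 else 0)" for i j and x :: complex
    by simp
  then show ?thesis
    unfolding sesq_form_def axis_def by (simp add: sum.delta)
qed

lemma psd_matrix_null_vectors_UNIV_imp_zero:
  assumes "psd_matrix X" "null_vectors X = UNIV"
  shows "X = 0"
proof -
  have "X $ a $ b = 0" for a b
  proof -
    have "quad_form X (axis a 1) = 0"
      using assms(2) unfolding null_vectors_def by blast
    then show ?thesis
      using psd_matrix_null_vector_sesq_form(1)[OF assms(1)] by (metis sesq_form_axis)
  qed
  then show ?thesis by (simp add: vec_eq_iff)
qed

lemma quad_form_orthogonal_null_vectors_bound:
  assumes "psd_matrix A"
  obtains c where "c \<ge> 0"
    "\<And>w. (\<forall>k\<in>null_vectors A. inner w k = 0) \<Longrightarrow> Re (quad_form B w) \<le> c * Re (quad_form A w)"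
proof -
  \<comment> \<open>\<open>quad_form A\<close> is positive on the compact set \<open>S\<close>, and both forms are 2-homogeneous.\<close>
  define S where "S = sphere 0 1 \<inter> (\<Inter>k\<in>null_vectors A. {w. inner k w = 0})"
  have in_S: "(1 / norm w) *\<^sub>R w \<in> S" if "w \<noteq> 0" "\<forall>k\<in>null_vectors A. inner w k = 0" for w
    using that by (auto simp: S_def inner_commute)
  have A_pos: "Re (quad_form A u) > 0" if "u \<in> S" for u
  proof (rule ccontr)
    assume "\<not> Re (quad_form A u) > 0"
    then have "quad_form A u = 0"
      using assms unfolding psd_matrix_def by (metis complex_eqI leI order_antisym zero_complex.sel)
    then have "inner u u = 0"
      using that by (auto simp: S_def null_vectors_def)
    then show False
      using that by (simp add: S_def)
  qed
  have "compact S"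
    unfolding S_def by (intro compact_Int_closed compact_sphere closed_INT ballI closed_hyperplane)
  moreover have "continuous_on S (\<lambda>u. Re (quad_form X u))" for X
    unfolding sesq_form_def by (intro continuous_intros)
  then have "continuous_on S (\<lambda>u. Re (quad_form B u) / Re (quad_form A u))"
    using A_pos by (intro continuous_on_divide) (fastforce+)
  ultimately have "bounded ((\<lambda>u. Re (quad_form B u) / Re (quad_form A u)) ` S)"
    by (intro compact_imp_bounded compact_continuous_image)
  then obtain K where "K > 0" and K_bound: "\<forall>u\<in>S. \<bar>Re (quad_form B u) / Re (quad_form A u)\<bar> \<le> K"
    unfolding bounded_pos by auto
  then have K: "Re (quad_form B u) / Re (quad_form A u) \<le> K" if "u \<in> S" for u
    using K_bound that abs_ge_self order_trans by blast
  have "Re (quad_form B w) \<le> K * Re (quad_form A w)" if "\<forall>k\<in>null_vectors A. inner w k = 0" for w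
  proof (cases "w = 0")
    case False
    define u where "u = (1 / norm w) *\<^sub>R w"
    have "u \<in> S" using in_S[OF False that] by (simp add: u_def)
    then have u_bound: "Re (quad_form B u) \<le> K * Re (quad_form A u)"
      using K A_pos by (simp add: pos_divide_le_eq mult.commute)
    have scaled: "quad_form X w = complex_of_real ((norm w)\<^sup>2) * quad_form X u" for X
      using quad_form_scaleR[of X "norm w" u] False by (simp add: u_def)
    have "Re (quad_form B w) = (norm w)\<^sup>2 * Re (quad_form B u)"
      by (simp add: scaled)
    also have "\<dots> \<le> (norm w)\<^sup>2 * (K * Re (quad_form A u))"
      using u_bound by (simp add: mult_left_mono)
    also have "\<dots> = K * Re (quad_form A w)"
      by (simp add: scaled)
    finally show ?thesis .
  qed simp
  with \<open>K > 0\<close> show ?thesis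
    using that[of K] by simp
qed

lemma psd_matrix_dominated_if_null_vectors_subset:
  assumes A: "psd_matrix A" and B: "psd_matrix B" and null: "null_vectors A \<subseteq> null_vectors B"
  obtains c where "c \<ge> 0" "\<And>v. Re (quad_form B v) \<le> c * Re (quad_form A v)"
proof -
  obtain c where "c \<ge> 0" and c:
    "\<And>w. (\<forall>k\<in>null_vectors A. inner w k = 0) \<Longrightarrow> Re (quad_form B w) \<le> c * Re (quad_form A w)"
    using quad_form_orthogonal_null_vectors_bound[OF A] by blast
  have "Re (quad_form B v) \<le> c * Re (quad_form A v)" for v
  proof -
    have span: "span (null_vectors A) = null_vectors A"
      using subspace_null_vectors[OF A] by simp
    obtain y z where "y \<in> span (null_vectors A)" "\<And>w. w \<in> span (null_vectors A) \<Longrightarrow> orthogonal z w"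
      and v: "v = y + z"
      using orthogonal_subspace_decomp_exists by blast
    then have y: "y \<in> null_vectors A" and z: "\<forall>k\<in>null_vectors A. inner z k = 0"
      by (simp_all add: span orthogonal_def)
    have "quad_form A v = quad_form A z" "quad_form B v = quad_form B z"
      using psd_matrix_null_vectors_add[OF A y] psd_matrix_null_vectors_add[OF B] y null
      unfolding v by auto
    then show ?thesis using c[OF z] by simp
  qed
  with \<open>c \<ge> 0\<close> that show ?thesis by blast
qed

definition positive_map :: "(complex^'n^'n \<Rightarrow> complex^'n^'n) \<Rightarrow> bool" where
  "positive_map \<beta> \<longleftrightarrow> (\<forall>A. psd_matrix A \<longrightarrow> psd_matrix (\<beta> A))"

lemma block_psd_1_const: "block_psd 1 (\<lambda>i j. A) \<longleftrightarrow> psd_matrix A"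
proof
  assume block: "block_psd 1 (\<lambda>i j. A)"
  show "psd_matrix A"
    unfolding psd_matrix_def
  proof
    fix v
    show "Im (quad_form A v) = 0 \<and> Re (quad_form A v) \<ge> 0"
      using block[unfolded block_psd_def, rule_format, of "\<lambda>_. v"]
      by (simp add: Let_def lessThan_Suc sesq_form_def)
  qed
qed (simp add: block_psd_def psd_matrix_def sesq_form_def lessThan_Suc)

lemma completely_positive_imp_positive_map: "completely_positive \<alpha> \<Longrightarrow> positive_map \<alpha>"
  unfolding completely_positive_def positive_map_def using block_psd_1_const by blast

lemma positive_map_funpow: "positive_map \<alpha> \<Longrightarrow> positive_map (\<alpha> ^^ k)"
  by (induction k) (auto simp: positive_map_def)

lemma positive_map_null_vectors_mono:
  assumes lin: "clinear_map \<beta>" and pos: "positive_map \<beta>"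
    and A: "psd_matrix A" and B: "psd_matrix B" and null: "null_vectors A \<subseteq> null_vectors B"
  shows "null_vectors (\<beta> A) \<subseteq> null_vectors (\<beta> B)"
proof
  fix v assume "v \<in> null_vectors (\<beta> A)"
  obtain c where "c \<ge> 0" and c: "\<And>v. Re (quad_form B v) \<le> c * Re (quad_form A v)"
    using psd_matrix_dominated_if_null_vectors_subset[OF A B null] by blast
  define D where "D = mat_scale (complex_of_real c) A - B"
  have "psd_matrix D"
    using A B c unfolding psd_matrix_def D_def by (simp add: sesq_form_diff_matrix sesq_form_mat_scale)
  then have D_psd: "psd_matrix (\<beta> D)" using pos unfolding positive_map_def by blast
  have \<beta>D: "\<beta> D = mat_scale (complex_of_real c) (\<beta> A) - \<beta> B"
    using lin by (simp add: D_def clinear_map_diff clinear_map_def)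
  have "quad_form (\<beta> D) v = - quad_form (\<beta> B) v"
    using \<open>v \<in> null_vectors (\<beta> A)\<close>
    by (simp add: \<beta>D null_vectors_def sesq_form_diff_matrix sesq_form_mat_scale)
  then have "Re (quad_form (\<beta> B) v) \<le> 0"
    using D_psd unfolding psd_matrix_def by (metis neg_0_le_iff_le uminus_complex.sel(1))
  moreover have "psd_matrix (\<beta> B)" using pos B unfolding positive_map_def by blast
  ultimately have "Re (quad_form (\<beta> B) v) = 0" "Im (quad_form (\<beta> B) v) = 0"
    unfolding psd_matrix_def by (meson order_antisym)+
  then show "v \<in> null_vectors (\<beta> B)"
    by (simp add: null_vectors_def complex_eq_iff)
qed

definition outer_product :: "complex^'n \<Rightarrow> complex^'n \<Rightarrow> complex^'n^'n" where
  "outer_product x y = (\<chi> a b. x$a * cnj (y$b))"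

lemma quad_form_outer_product_self:
  "quad_form (outer_product x x) v = complex_of_real ((cmod (\<Sum>a\<in>UNIV. cnj (v$a) * x$a))\<^sup>2)"
proof -
  have "quad_form (outer_product x x) v = (\<Sum>a\<in>UNIV. \<Sum>b\<in>UNIV. (cnj (v$a) * x$a) * cnj (cnj (v$b) * x$b))"
    unfolding sesq_form_def outer_product_def by (simp add: mult_ac)
  also have "\<dots> = (\<Sum>a\<in>UNIV. cnj (v$a) * x$a) * cnj (\<Sum>b\<in>UNIV. cnj (v$b) * x$b)"
    by (simp only: cnj_sum sum_product)
  finally show ?thesis
    by (simp only: complex_norm_square)
qed

lemma psd_matrix_outer_product_self: "psd_matrix (outer_product x x)"
  unfolding psd_matrix_def quad_form_outer_product_self by simp

lemma outer_product_polarization: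
  "mat_scale 4 (outer_product x y) =
     outer_product (x + y) (x + y) - outer_product (x - y) (x - y)
     + mat_scale \<i> (outer_product (x + \<i> *s y) (x + \<i> *s y))
     - mat_scale \<i> (outer_product (x - \<i> *s y) (x - \<i> *s y))"
  by (simp add: vec_eq_iff outer_product_def mat_scale_def algebra_simps)

lemma sum_outer_product_columns: "(\<Sum>b\<in>UNIV. outer_product (column b M) (axis b 1)) = M"
proof -
  have "M $ i $ b * cnj (if j = b then 1 else 0) = (if b = j then M $ i $ b else 0)" for i j b
    by simp
  then show ?thesis
    by (simp add: vec_eq_iff sum_component outer_product_def column_def axis_def sum.delta)
qed

lemma clinear_map_zero_on_psd_imp_zero:
  assumes lin: "clinear_map \<beta>" and psd_zero: "\<And>A. psd_matrix A \<Longrightarrow> \<beta> A = 0"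
  shows "\<beta> M = 0"
proof -
  have lin_rules: "\<beta> (A + B) = \<beta> A + \<beta> B" "\<beta> (A - B) = \<beta> A - \<beta> B"
    "\<beta> (mat_scale c A) = mat_scale c (\<beta> A)" for A B c
    using lin clinear_map_diff unfolding clinear_map_def by blast+
  have "\<beta> (outer_product x y) = 0" for x y
  proof -
    have "\<beta> (outer_product x y) = mat_scale (1/4) (\<beta> (mat_scale 4 (outer_product x y)))"
      by (simp add: lin_rules mat_scale_mat_scale)
    also have "\<beta> (mat_scale 4 (outer_product x y)) = 0"
      unfolding outer_product_polarization lin_rules by (simp add: psd_zero psd_matrix_outer_product_self)
    finally show ?thesis
      by simp
  qed
  then have "\<beta> (\<Sum>b\<in>UNIV. outer_product (column b M) (axis b 1)) = 0"
    using lin by (simp add: clinear_map_sum)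
  then show ?thesis
    by (simp only: sum_outer_product_columns)
qed

lemma positive_map_zero_if_unit_zero:
  fixes \<beta> :: "complex^'n^'n \<Rightarrow> complex^'n^'n"
  assumes lin: "clinear_map \<beta>" and pos: "positive_map \<beta>" and unit: "\<beta> (mat 1) = 0"
  shows "\<beta> M = 0"
proof (rule clinear_map_zero_on_psd_imp_zero[OF lin])
  fix A :: "complex^'n^'n"
  assume A: "psd_matrix A"
  have "null_vectors (\<beta> (mat 1)) \<subseteq> null_vectors (\<beta> A)"
    using A by (intro positive_map_null_vectors_mono[OF lin pos psd_matrix_mat_1])
      (simp_all add: null_vectors_mat_1)
  then have "null_vectors (\<beta> A) = UNIV"
    by (simp add: unit null_vectors_def top_le)
  then show "\<beta> A = 0"
    using psd_matrix_null_vectors_UNIV_imp_zero pos A unfolding positive_map_def by blast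
qed

lemma positive_map_nilpotent_on_unit:
  fixes \<alpha> :: "complex^'n^'n \<Rightarrow> complex^'n^'n"
  assumes lin: "clinear_map \<alpha>" and pos: "positive_map \<alpha>" and nil: "(\<alpha> ^^ m) (mat 1) = 0"
  shows "(\<alpha> ^^ CARD('n)) (mat 1) = 0"
proof -
  define P where "P k = (\<alpha> ^^ k) (mat 1)" for k
  define N where "N k = null_vectors (P k)" for k
  have psd: "psd_matrix (P k)" for k
    using positive_map_funpow[OF pos] psd_matrix_mat_1 unfolding positive_map_def P_def by blast
  have P_Suc: "P (Suc k) = \<alpha> (P k)" for k
    by (simp add: P_def)
  have N_Suc_mono: "N (Suc j) \<subseteq> N (Suc k)" if "N j \<subseteq> N k" for j k
    using positive_map_null_vectors_mono[OF lin pos psd psd that[unfolded N_def]]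
    by (simp add: N_def P_Suc)
  have "N (vec.dim (UNIV :: (complex^'n) set)) = UNIV"
  proof (rule vec.subspace_chain_reaches_UNIV)
    show "vec.subspace (N k)" for k
      unfolding N_def using psd by (rule vec_subspace_null_vectors)
    show "N k \<subseteq> N (Suc k)" for k
    proof (induction k)
      case 0
      show ?case by (simp add: N_def P_def null_vectors_mat_1)
    next
      case (Suc k)
      then show ?case by (rule N_Suc_mono)
    qed
    show "N (Suc (Suc k)) = N (Suc k)" if "N (Suc k) = N k" for k
      using N_Suc_mono[of "Suc k" k] N_Suc_mono[of k "Suc k"] that by blast
    show "N m = UNIV"
      using nil by (simp add: N_def P_def null_vectors_def)
  qed
  then have "null_vectors (P CARD('n)) = UNIV"
    unfolding N_def vec_dim_card .
  then show ?thesis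
    using psd_matrix_null_vectors_UNIV_imp_zero[OF psd] unfolding P_def by blast
qed

theorem lemma8p4:
  fixes \<alpha> :: "complex^'n^'n \<Rightarrow> complex^'n^'n" and m :: nat
  assumes "clinear_map \<alpha>"
    and "completely_positive \<alpha>"
    and "m \<ge> 1"
    and "(\<alpha> ^^ m) = (\<lambda>_. 0)"
  shows "(\<alpha> ^^ CARD('n)) = (\<lambda>_. 0)"
proof -
  have pos: "positive_map \<alpha>"
    using assms(2) by (rule completely_positive_imp_positive_map)
  have "(\<alpha> ^^ CARD('n)) (mat 1) = 0"
    using assms(4) by (intro positive_map_nilpotent_on_unit[OF assms(1) pos, of m]) simp
  then show ?thesis
    using positive_map_zero_if_unit_zero[OF clinear_map_funpow[OF assms(1)] positive_map_funpow[OF pos]]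
    by blast
qed

end
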